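(* Let $\Phi$ be real analytic on an open set $U\subset\mathbb R^N$, let $\mathbf z_0\in U$, and let $c>0$, $\delta\in(0,1]$, $\mu\in[1/2,1)$ be such that $\overline{B_\delta(\mathbf z_0)}\subset U$ and $$\|\nabla\Phi(\mathbf z)\|\ge c|\Phi(\mathbf z)-\Phi(\mathbf z_0)|^\mu\quad\text{for all }\mathbf z\text{ with }\|\mathbf z-\mathbf z_0\|\le\delta.$$ Let $\mathbf E:[0,\infty)\to\mathbb R^N$ be continuous with $\|\mathbf E(t)\|\le C_1e^{-c_1t}$ for some $C_1,c_1>0$, and let $\mathbf z$ be a $C^1$ solution of $\dot{\mathbf z}=-\nabla\Phi(\mathbf z)+\mathbf E(t)$. Set $$H(t)=\Phi(\mathbf z(t))+\tfrac34\int_t^\infty\|\mathbf E(s)\|^2ds,\qquad \tilde E(t)=c\Big(\tfrac34\int_t^\infty\|\mathbf E(s)\|^2ds\Big)^\mu+\|\mathbf E(t)\|.$$ If $\mathbf z(t)\in B_\delta(\mathbf z_0)$ for all $t\in[t',t'']$, then $$\int_{t'}^{t''}\|\dot{\mathbf z}(s)\|ds\le 4\int_{H(t'')}^{H(t')}\frac{d\xi}{c|\xi-\Phi(\mathbf z_0)|^\mu}+\int_{t'}^{t''}\tilde E(s)\,ds .$$ (Here $\tilde E$ decays exponentially.)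
   Context: $\|\cdot\|$ is the Euclidean norm on $\mathbb R^N$ and $B_\delta(\mathbf z_0)=\{\mathbf z:\|\mathbf z-\mathbf z_0\|<\delta\}$. *)

theory Defs
  imports "HOL-Analysis.Analysis"
begin

text \<open>Real analyticity on an open set of R^N (N = CARD('n)): near every point the function
  is the sum of an (unconditionally, i.e. absolutely) convergent multivariate power series,
  indexed by multi-indices \<alpha> :: 'n \<Rightarrow> nat.\<close>
definition real_analytic_on :: "(real^'n \<Rightarrow> real) \<Rightarrow> (real^'n) set \<Rightarrow> bool" where
  "real_analytic_on f U \<longleftrightarrow>
     (\<forall>x\<in>U. \<exists>r>0. \<exists>a :: ('n \<Rightarrow> nat) \<Rightarrow> real.
        \<forall>y\<in>ball x r. ((\<lambda>\<alpha>. a \<alpha> * (\<Prod>i\<in>UNIV. (y$i - x$i) ^ \<alpha> i)) has_sum f y) UNIV)"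

definition gradient :: "(real^'n \<Rightarrow> real) \<Rightarrow> real^'n \<Rightarrow> real^'n" where
  "gradient f z = (\<chi> i. frechet_derivative f (at z) (axis i 1))"

end

theory Submission
  imports Defs
begin

text \<open>The function \<open>H(t) = \<Phi>(z t) + 3/4 \<integral>\<^sub>t\<^sup>\<infinity> \<parallel>E\<parallel>\<^sup>2\<close> is a Lyapunov function of the perturbed
  flow: its derivative \<open>\<nabla>\<Phi> \<bullet> (E - \<nabla>\<Phi>) - 3/4 \<parallel>E\<parallel>\<^sup>2\<close> is at most \<open>-2/3 \<parallel>\<nabla>\<Phi>\<parallel>\<^sup>2\<close>. By subadditivity of
  \<open>s \<mapsto> s powr \<mu>\<close> the Lojasiewicz inequality for \<open>\<Phi>\<close> gives \<open>c \<bar>H - \<Phi> z0\<bar> powr \<mu> \<le> \<parallel>\<nabla>\<Phi>\<parallel> + R\<close> with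
  \<open>R = c (3/4 \<integral>\<^sub>t\<^sup>\<infinity> \<parallel>E\<parallel>\<^sup>2) powr \<mu>\<close>. Hence, for the primitive \<open>\<psi>\<close> of \<open>1 / (c \<bar>\<xi>\<bar> powr \<mu>)\<close>, the
  function \<open>4 \<psi>(H - \<Phi> z0)\<close> decreases at least at rate \<open>\<parallel>z'\<parallel> - R - \<parallel>E\<parallel>\<close>; integrating this gives the
  bound. Real analyticity of \<open>\<Phi>\<close> is only used to make \<open>\<Phi>\<close> differentiable.\<close>

definition unit_multi_index :: "'n \<Rightarrow> 'n \<Rightarrow> nat" where
  "unit_multi_index i = (\<lambda>j. if j = i then 1 else 0)"

lemma sum_unit_multi_index: "sum (unit_multi_index i) (UNIV :: 'n::finite set) = 1"
  by (simp add: unit_multi_index_def)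

lemma prod_power_unit_multi_index:
  fixes h :: "'n::finite \<Rightarrow> 'a::comm_monoid_mult"
  shows "(\<Prod>j\<in>UNIV. h j ^ unit_multi_index i j) = h i"
  unfolding unit_multi_index_def by (simp add: if_distrib[of "\<lambda>k. _ ^ k"] prod.delta cong: if_cong)

lemma multi_index_degree_le_1:
  "{\<alpha> :: 'n::finite \<Rightarrow> nat. sum \<alpha> UNIV \<le> 1} = insert (\<lambda>_. 0) (range unit_multi_index)"
proof (intro equalityI subsetI)
  fix \<alpha> :: "'n \<Rightarrow> nat"
  assume "\<alpha> \<in> {\<alpha>. sum \<alpha> UNIV \<le> 1}"
  then have deg: "\<alpha> i + sum \<alpha> (UNIV - {i}) \<le> 1" for i
    by (simp add: sum.remove)
  show "\<alpha> \<in> insert (\<lambda>_. 0) (range unit_multi_index)"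
  proof (cases "\<exists>i. \<alpha> i \<noteq> 0")
    case True
    then obtain i where "\<alpha> i \<noteq> 0" ..
    with deg[of i] have "\<alpha> i = 1" "sum \<alpha> (UNIV - {i}) = 0"
      by linarith+
    then have "\<alpha> = unit_multi_index i"
      by (force simp: unit_multi_index_def)
    then show ?thesis by simp
  qed auto
qed (auto simp: sum_unit_multi_index)

lemma abs_prod_power_le_norm_power:
  fixes h :: "real^'n"
  shows "\<bar>\<Prod>i\<in>UNIV. (h$i) ^ \<alpha> i\<bar> \<le> norm h ^ sum \<alpha> UNIV"
proof -
  have "\<bar>\<Prod>i\<in>UNIV. (h$i) ^ \<alpha> i\<bar> = (\<Prod>i\<in>UNIV. \<bar>h$i\<bar> ^ \<alpha> i)"
    by (simp add: abs_prod power_abs)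
  also have "\<dots> \<le> (\<Prod>i\<in>UNIV. norm h ^ \<alpha> i)"
    by (intro prod_mono conjI power_mono component_le_norm_cart) auto
  finally show ?thesis by (simp add: power_sum)
qed

lemma has_derivative_of_quadratic_remainder:
  fixes f :: "'a::real_normed_vector \<Rightarrow> 'b::real_normed_vector"
  assumes "bounded_linear L" "\<rho> > 0"
    and remainder: "\<And>y. norm (y - x) \<le> \<rho> \<Longrightarrow> norm (f y - f x - L (y - x)) \<le> B * (norm (y - x))\<^sup>2"
  shows "(f has_derivative L) (at x)"
  unfolding has_derivative_at_alt
proof (intro conjI \<open>bounded_linear L\<close> allI impI)
  fix e :: real
  assume "e > 0"
  define d where "d = min \<rho> (e / (\<bar>B\<bar> + 1))"
  have "d > 0"
    using \<open>e > 0\<close> \<open>\<rho> > 0\<close> by (simp add: d_def)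
  moreover have "norm (f y - f x - L (y - x)) \<le> e * norm (y - x)" if "norm (y - x) < d" for y
  proof -
    have "\<bar>B\<bar> * norm (y - x) \<le> (\<bar>B\<bar> + 1) * norm (y - x)"
      by (intro mult_right_mono) auto
    also have "\<dots> < e"
      using \<open>norm (y - x) < d\<close> by (simp add: d_def pos_less_divide_eq mult.commute)
    finally have "\<bar>B\<bar> * norm (y - x) \<le> e"
      by simp
    have "norm (f y - f x - L (y - x)) \<le> B * (norm (y - x))\<^sup>2"
      using remainder \<open>norm (y - x) < d\<close> by (simp add: d_def)
    also have "\<dots> \<le> (\<bar>B\<bar> * norm (y - x)) * norm (y - x)"
      unfolding power2_eq_square mult.assoc by (intro mult_right_mono) auto
    also have "\<dots> \<le> e * norm (y - x)"
      using \<open>\<bar>B\<bar> * norm (y - x) \<le> e\<close> by (simp add: mult_right_mono)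
    finally show ?thesis .
  qed
  ultimately show "\<exists>d>0. \<forall>y. norm (y - x) < d \<longrightarrow> norm (f y - f x - L (y - x)) \<le> e * norm (y - x)"
    by blast
qed

lemma multi_power_series_quadratic_remainder:
  fixes a :: "('n::finite \<Rightarrow> nat) \<Rightarrow> real" and x y :: "real^'n"
  assumes "\<rho> > 0" "norm (y - x) \<le> \<rho>"
    and series: "((\<lambda>\<alpha>. a \<alpha> * (\<Prod>i\<in>UNIV. (y$i - x$i) ^ \<alpha> i)) has_sum f y) UNIV"
    and abs_summable: "(\<lambda>\<alpha>. \<bar>a \<alpha>\<bar> * \<rho> ^ sum \<alpha> UNIV) summable_on UNIV"
  shows "\<bar>f y - a (\<lambda>_. 0) - (\<Sum>i\<in>UNIV. a (unit_multi_index i) * (y - x)$i)\<bar>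
    \<le> infsum (\<lambda>\<alpha>. \<bar>a \<alpha>\<bar> * \<rho> ^ sum \<alpha> UNIV) {\<alpha>. 2 \<le> sum \<alpha> UNIV} / \<rho>\<^sup>2 * (norm (y - x))\<^sup>2"
    (is "\<bar>?r\<bar> \<le> _")
proof -
  define F where "F = {\<alpha> :: 'n \<Rightarrow> nat. sum \<alpha> UNIV \<le> 1}"
  define A where "A = {\<alpha> :: 'n \<Rightarrow> nat. 2 \<le> sum \<alpha> UNIV}"
  define B where "B = infsum (\<lambda>\<alpha>. \<bar>a \<alpha>\<bar> * \<rho> ^ sum \<alpha> UNIV) A"
  define s where "s = norm (y - x) / \<rho>"
  define t where "t \<alpha> = a \<alpha> * (\<Prod>i\<in>UNIV. (y$i - x$i) ^ \<alpha> i)" for \<alpha>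
  have "s \<le> 1"
    using assms(1,2) by (simp add: s_def)
  have "inj (unit_multi_index :: 'n \<Rightarrow> _)" "(\<lambda>_. 0) \<notin> range (unit_multi_index :: 'n \<Rightarrow> _)"
    by (auto simp: inj_def unit_multi_index_def fun_eq_iff split: if_splits)
  then have sum_F: "sum t F = a (\<lambda>_. 0) + (\<Sum>i\<in>UNIV. a (unit_multi_index i) * (y - x)$i)"
    unfolding F_def multi_index_degree_le_1 by (simp add: sum.reindex t_def prod_power_unit_multi_index)
  have "finite F"
    unfolding F_def multi_index_degree_le_1 by simp
  have "(t has_sum (f y - sum t F)) (UNIV - F)"
    by (rule has_sum_Diff[OF series[folded t_def] has_sum_finite[OF \<open>finite F\<close>]]) simp
  moreover have "UNIV - F = A"
    by (auto simp: F_def A_def)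
  ultimately have remainder: "(t has_sum ?r) A"
    by (simp add: sum_F diff_diff_eq)
  have higher_order_bound: "\<bar>t \<alpha>\<bar> \<le> s\<^sup>2 * (\<bar>a \<alpha>\<bar> * \<rho> ^ sum \<alpha> UNIV)" if "\<alpha> \<in> A" for \<alpha>
  proof -
    have "\<bar>\<Prod>i\<in>UNIV. (y$i - x$i) ^ \<alpha> i\<bar> \<le> norm (y - x) ^ sum \<alpha> UNIV"
      using abs_prod_power_le_norm_power[of "y - x" \<alpha>] by simp
    also have "\<dots> = \<rho> ^ sum \<alpha> UNIV * s ^ sum \<alpha> UNIV"
      using \<open>\<rho> > 0\<close> by (simp add: s_def power_divide)
    also have "\<dots> \<le> \<rho> ^ sum \<alpha> UNIV * s\<^sup>2"
      using \<open>s \<le> 1\<close> \<open>\<rho> > 0\<close> that by (intro mult_left_mono power_decreasing) (auto simp: A_def s_def)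
    finally show ?thesis
      unfolding t_def abs_mult by (simp add: mult_left_mono mult_ac)
  qed
  have majorant: "((\<lambda>\<alpha>. s\<^sup>2 * (\<bar>a \<alpha>\<bar> * \<rho> ^ sum \<alpha> UNIV)) has_sum s\<^sup>2 * B) A"
    unfolding B_def by (intro has_sum_cmult_right has_sum_infsum summable_on_subset_banach[OF abs_summable]) simp
  have "?r \<le> s\<^sup>2 * B"
    by (rule has_sum_mono[OF remainder majorant]) (use higher_order_bound abs_le_D1 in blast)
  moreover have "- ?r \<le> s\<^sup>2 * B"
    by (rule has_sum_mono[OF has_sum_uminus[THEN iffD2] majorant])
       (use remainder higher_order_bound abs_le_D2 in auto)
  ultimately have "\<bar>?r\<bar> \<le> s\<^sup>2 * B"
    by linarith
  then show ?thesis
    using \<open>\<rho> > 0\<close> by (simp add: A_def B_def s_def power_divide field_simps)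
qed

lemma real_analytic_on_imp_differentiable:
  fixes f :: "real^'n \<Rightarrow> real"
  assumes "real_analytic_on f U" "x \<in> U"
  shows "f differentiable (at x)"
proof -
  obtain r a where "r > 0" and series_ball: "\<And>y. y \<in> ball x r \<Longrightarrow>
      ((\<lambda>\<alpha>. a \<alpha> * (\<Prod>i\<in>UNIV. (y$i - x$i) ^ \<alpha> i)) has_sum f y) UNIV"
    using assms unfolding real_analytic_on_def by blast
  define \<rho> where "\<rho> = r / (2 * CARD('n))"
  have "\<rho> > 0" "CARD('n) * \<rho> < r"
    using \<open>r > 0\<close> by (simp_all add: \<rho>_def)
  moreover have "\<rho> \<le> CARD('n) * \<rho>"
    using mult_right_mono[of 1 "real CARD('n)" \<rho>] \<open>\<rho> > 0\<close> by (simp add: Suc_le_eq)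
  ultimately have "\<rho> < r"
    by linarith
  then have series: "((\<lambda>\<alpha>. a \<alpha> * (\<Prod>i\<in>UNIV. (y$i - x$i) ^ \<alpha> i)) has_sum f y) UNIV"
    if "norm (y - x) \<le> \<rho>" for y
    using that by (intro series_ball) (simp add: dist_norm norm_minus_commute)
  \<comment> \<open>At the corner \<open>x + (\<rho>, \<dots>, \<rho>)\<close> every monomial equals \<open>\<rho> ^ \<bar>\<alpha>\<bar>\<close>, so convergence there
    is absolute convergence of the majorant series.\<close>
  have "norm ((x + (\<chi> i. \<rho>)) - x) \<le> CARD('n) * \<rho>"
    using norm_le_l1_cart[of "(\<chi> i. \<rho>) :: real^'n"] \<open>\<rho> > 0\<close> by simp
  with series_ball[of "x + (\<chi> i. \<rho>)"] \<open>CARD('n) * \<rho> < r\<close>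
  have "((\<lambda>\<alpha>. a \<alpha> * \<rho> ^ sum \<alpha> UNIV) has_sum f (x + (\<chi> i. \<rho>))) UNIV"
    by (simp add: dist_norm norm_minus_commute power_sum)
  then have "(\<lambda>\<alpha>. norm (a \<alpha> * \<rho> ^ sum \<alpha> UNIV)) summable_on UNIV"
    by (intro summable_on_iff_abs_summable_on_real[THEN iffD1] has_sum_imp_summable)
  then have abs_summable: "(\<lambda>\<alpha>. \<bar>a \<alpha>\<bar> * \<rho> ^ sum \<alpha> UNIV) summable_on UNIV"
    using \<open>\<rho> > 0\<close> by (simp add: abs_mult)
  define L where "L h = (\<Sum>i\<in>UNIV. a (unit_multi_index i) * h$i)" for h :: "real^'n"
  define K where "K = infsum (\<lambda>\<alpha>. \<bar>a \<alpha>\<bar> * \<rho> ^ sum \<alpha> UNIV) {\<alpha>. 2 \<le> sum \<alpha> UNIV} / \<rho>\<^sup>2"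
  have remainder: "\<bar>f y - a (\<lambda>_. 0) - L (y - x)\<bar> \<le> K * (norm (y - x))\<^sup>2"
    if "norm (y - x) \<le> \<rho>" for y
    unfolding L_def K_def using \<open>\<rho> > 0\<close> that series[OF that] abs_summable
    by (rule multi_power_series_quadratic_remainder)
  have "f x = a (\<lambda>_. 0)"
    using remainder[of x] \<open>\<rho> > 0\<close> by (simp add: L_def)
  have "bounded_linear L"
    unfolding L_def by (intro bounded_linear_sum bounded_linear_const_mult bounded_linear_vec_nth)
  then have "(f has_derivative L) (at x)"
    using \<open>\<rho> > 0\<close> by (rule has_derivative_of_quadratic_remainder[where B = K])
      (use remainder \<open>f x = _\<close> in simp)
  then show ?thesis
    by (rule differentiableI)
qed

lemma has_real_derivative_comp_gradient:
  fixes f :: "real^'n \<Rightarrow> real"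
  assumes "f differentiable (at (z t))" "(z has_vector_derivative z') (at t within S)"
  shows "((\<lambda>s. f (z s)) has_real_derivative gradient f (z t) \<bullet> z') (at t within S)"
proof -
  let ?D = "frechet_derivative f (at (z t))"
  have D: "(f has_derivative ?D) (at (z t))"
    using assms(1) by (rule frechet_derivative_works[THEN iffD1])
  have "?D v = gradient f (z t) \<bullet> v" for v
  proof -
    have "?D v = ?D (\<Sum>i\<in>UNIV. v$i *\<^sub>R axis i 1)"
      by (simp add: basis_expansion scalar_mult_eq_scaleR[symmetric])
    also have "\<dots> = (\<Sum>i\<in>UNIV. v$i * ?D (axis i 1))"
      using has_derivative_linear[OF D] by (simp add: linear_sum linear_scale)
    finally show ?thesis
      unfolding gradient_def inner_vec_def by (simp add: mult.commute)
  qed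
  moreover have "((f \<circ> z) has_vector_derivative ?D z') (at t within S)"
    by (rule vector_derivative_diff_chain_within[OF assms(2) has_derivative_at_withinI[OF D]])
  ultimately show ?thesis
    by (simp add: o_def has_real_derivative_iff_has_vector_derivative)
qed

lemma powr_add_le_add_powr:
  fixes x y m :: real
  assumes "0 \<le> x" "0 \<le> y" "0 < m" "m \<le> 1"
  shows "(x + y) powr m \<le> x powr m + y powr m"
proof (cases "x + y = 0")
  case False
  define s where "s = x + y"
  have "s > 0"
    using False assms by (simp add: s_def)
  have le_powr: "u \<le> u powr m" if "0 \<le> u" "u \<le> 1" for u
    using powr_mono'[of m 1 u] that assms by simp
  have "1 = x / s + y / s"
    using \<open>s > 0\<close> by (simp add: s_def add_divide_distrib[symmetric])
  also have "\<dots> \<le> (x / s) powr m + (y / s) powr m"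
    using assms \<open>s > 0\<close> by (intro add_mono le_powr) (simp_all add: s_def)
  also have "\<dots> = (x powr m + y powr m) / s powr m"
    using assms \<open>s > 0\<close> by (simp add: powr_divide add_divide_distrib)
  finally show ?thesis
    using \<open>s > 0\<close> by (simp add: s_def field_simps)
qed (use assms in auto)

text \<open>An odd primitive of \<open>1 / (c \<bar>x\<bar> powr \<mu>)\<close>; it is continuous at \<open>0\<close> because \<open>\<mu> < 1\<close>.\<close>
definition lojasiewicz_primitive :: "real \<Rightarrow> real \<Rightarrow> real \<Rightarrow> real" where
  "lojasiewicz_primitive c \<mu> x = sgn x * \<bar>x\<bar> powr (1 - \<mu>) / (c * (1 - \<mu>))"

lemma has_real_derivative_lojasiewicz_primitive:
  assumes "c > 0" "\<mu> < 1" "x \<noteq> 0"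
  shows "(lojasiewicz_primitive c \<mu> has_real_derivative 1 / (c * \<bar>x\<bar> powr \<mu>)) (at x)"
proof -
  define \<sigma> where "\<sigma> = sgn x"
  have \<sigma>: "\<sigma> * \<sigma> = 1" "\<sigma> * x = \<bar>x\<bar>" "\<sigma> * x > 0"
    using assms by (auto simp: \<sigma>_def sgn_if)
  have "((\<lambda>y. (\<sigma> * y) powr (1 - \<mu>)) has_real_derivative (1 - \<mu>) * (\<sigma> * x) powr (1 - \<mu> - 1) * \<sigma>) (at x)"
    using \<sigma> by (auto intro!: derivative_eq_intros)
  from DERIV_cdivide[OF DERIV_cmult[OF this, of \<sigma>], of "c * (1 - \<mu>)"]
  have chain: "((\<lambda>y. \<sigma> * (\<sigma> * y) powr (1 - \<mu>) / (c * (1 - \<mu>))) has_real_derivative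
      \<sigma> * ((1 - \<mu>) * (\<sigma> * x) powr (1 - \<mu> - 1) * \<sigma>) / (c * (1 - \<mu>))) (at x)" .
  have sgn_cancel: "\<sigma> * ((1 - \<mu>) * (\<sigma> * x) powr (1 - \<mu> - 1) * \<sigma>) = (\<sigma> * \<sigma>) * (1 - \<mu>) * \<bar>x\<bar> powr (- \<mu>)"
    unfolding \<sigma>(2) by (simp add: algebra_simps)
  have derivative_value: "(\<sigma> * \<sigma>) * (1 - \<mu>) * \<bar>x\<bar> powr (- \<mu>) / (c * (1 - \<mu>)) = 1 / (c * \<bar>x\<bar> powr \<mu>)"
    using assms by (simp add: \<sigma>(1) powr_minus field_simps)
  have deriv: "((\<lambda>y. \<sigma> * (\<sigma> * y) powr (1 - \<mu>) / (c * (1 - \<mu>))) has_real_derivative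
      1 / (c * \<bar>x\<bar> powr \<mu>)) (at x)"
    using chain unfolding sgn_cancel derivative_value .
  have local_eq: "\<sigma> * (\<sigma> * y) powr (1 - \<mu>) / (c * (1 - \<mu>)) = lojasiewicz_primitive c \<mu> y"
    if "\<sigma> * y > 0" for y
    using that assms(3) by (cases "x > 0") (auto simp: lojasiewicz_primitive_def \<sigma>_def)
  show ?thesis
    by (rule has_field_derivative_transform_within_open[OF deriv, of "{y. \<sigma> * y > 0}"])
      (use \<sigma>(3) local_eq in \<open>auto simp: open_Collect_less\<close>)
qed

lemma isCont_lojasiewicz_primitive:
  assumes "c > 0" "\<mu> < 1"
  shows "isCont (lojasiewicz_primitive c \<mu>) x"
proof (cases "x = 0")
  case True
  have "continuous (at 0) (\<lambda>y. \<bar>y\<bar> powr (1 - \<mu>) / (c * (1 - \<mu>)))"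
    using assms by (intro continuous_intros) auto
  then have "((\<lambda>y. \<bar>y\<bar> powr (1 - \<mu>) / (c * (1 - \<mu>))) \<longlongrightarrow> 0) (at 0)"
    using assms by (simp add: isCont_def)
  then have "(lojasiewicz_primitive c \<mu> \<longlongrightarrow> 0) (at 0)"
    by (rule Lim_null_comparison[rotated])
      (use assms in \<open>auto simp: lojasiewicz_primitive_def abs_mult abs_sgn_eq\<close>)
  with True show ?thesis
    by (simp add: isCont_def lojasiewicz_primitive_def)
qed (use assms DERIV_isCont has_real_derivative_lojasiewicz_primitive in blast)

lemma continuous_on_lojasiewicz_primitive [continuous_intros]:
  assumes "c > 0" "\<mu> < 1" "continuous_on S f"
  shows "continuous_on S (\<lambda>x. lojasiewicz_primitive c \<mu> (f x))"
  using continuous_on_compose2[OF continuous_at_imp_continuous_on assms(3)]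
    isCont_lojasiewicz_primitive[OF assms(1,2)] by blast

lemma LBINT_lojasiewicz_primitive:
  assumes "c > 0" "0 < \<mu>" "\<mu> < 1" "u \<le> v"
  shows "(LBINT \<xi>=u..v. 1 / (c * \<bar>\<xi> - p\<bar> powr \<mu>))
    = lojasiewicz_primitive c \<mu> (v - p) - lojasiewicz_primitive c \<mu> (u - p)"
proof -
  let ?g = "\<lambda>\<xi>. 1 / (c * \<bar>\<xi> - p\<bar> powr \<mu>)"
  have "(?g has_integral (lojasiewicz_primitive c \<mu> (v - p) - lojasiewicz_primitive c \<mu> (u - p))) {u..v}"
  proof (rule fundamental_theorem_of_calculus_interior_strong[of "{p}"])
    show "continuous_on {u..v} (\<lambda>\<xi>. lojasiewicz_primitive c \<mu> (\<xi> - p))"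
      using assms by (intro continuous_intros) auto
  next
    fix \<xi> assume "\<xi> \<in> {u<..<v} - {p}"
    then have "((\<lambda>\<xi>. lojasiewicz_primitive c \<mu> (\<xi> - p)) has_real_derivative ?g \<xi> * 1) (at \<xi>)"
      using assms by (intro DERIV_chain2[OF has_real_derivative_lojasiewicz_primitive]) (auto intro!: derivative_eq_intros)
    then show "((\<lambda>\<xi>. lojasiewicz_primitive c \<mu> (\<xi> - p)) has_vector_derivative ?g \<xi>) (at \<xi>)"
      by (simp add: has_real_derivative_iff_has_vector_derivative)
  qed (use assms in auto)
  moreover have "?g absolutely_integrable_on {u..v}"
    using calculation assms by (intro nonnegative_absolutely_integrable_1) (auto simp: integrable_on_def)
  then have "set_integrable lborel {u..v} ?g"
    unfolding set_integrable_def by (subst (asm) integrable_completion) measurable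
  ultimately show ?thesis
    using assms by (simp add: interval_integral_eq_integral integral_unique)
qed

lemma DERIV_le_imp_diff_le_integral:
  fixes P G :: "real \<Rightarrow> real"
  assumes "finite S" "a \<le> b" "continuous_on {a..b} P" "G integrable_on {a..b}"
    and deriv: "\<And>x. x \<in> {a<..<b} - S \<Longrightarrow> \<exists>D. (P has_real_derivative D) (at x) \<and> D \<le> G x"
  shows "P b - P a \<le> integral {a..b} G"
proof -
  define P' where "P' x = (if x \<in> {a<..<b} - S
    then SOME D. (P has_real_derivative D) (at x) \<and> D \<le> G x else G x)" for x
  have P': "(P has_real_derivative P' x) (at x) \<and> P' x \<le> G x" if "x \<in> {a<..<b} - S" for x
    using someI_ex[OF deriv[OF that]] that by (simp add: P'_def)
  have "(P' has_integral (P b - P a)) {a..b}"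
    using assms(1-3) P' by (intro fundamental_theorem_of_calculus_interior_strong)
      (auto simp: has_real_derivative_iff_has_vector_derivative)
  then show ?thesis
    by (rule has_integral_le[OF _ integrable_integral[OF assms(4)]]) (use P' in \<open>auto simp: P'_def\<close>)
qed

lemma antimono_level_set_locally_constant:
  fixes H :: "real \<Rightarrow> real"
  assumes antimono: "\<And>s t. a \<le> s \<Longrightarrow> s \<le> t \<Longrightarrow> t \<le> b \<Longrightarrow> H t \<le> H s"
  obtains S where "finite S"
    and "\<And>x. x \<in> {a<..<b} - S \<Longrightarrow> H x = p \<Longrightarrow> \<exists>k1 k2. k1 < x \<and> x < k2 \<and> (\<forall>s\<in>{k1<..<k2}. H s = p)"
proof -
  define K where "K = {t \<in> {a..b}. H t = p}"
  have "\<exists>k1 k2. k1 < x \<and> x < k2 \<and> (\<forall>s\<in>{k1<..<k2}. H s = p)"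
    if x: "x \<in> {a<..<b} - {Inf K, Sup K}" "H x = p" for x
  proof -
    have "x \<in> K" "bdd_below K" "bdd_above K"
      using x by (auto simp: K_def intro: bdd_belowI[of _ a] bdd_aboveI[of _ b])
    then have "Inf K \<le> x" "x \<le> Sup K"
      by (auto intro: cInf_lower cSup_upper)
    with x(1) have "Inf K < x" "x < Sup K"
      by auto
    then obtain k1 k2 where "k1 \<in> K" "k1 < x" "k2 \<in> K" "x < k2"
      using cInf_less_iff less_cSup_iff \<open>x \<in> K\<close> \<open>bdd_below K\<close> \<open>bdd_above K\<close> by (metis empty_iff)
    then have "H s = p" if "s \<in> {k1<..<k2}" for s
      using antimono[of k1 s] antimono[of s k2] that by (force simp: K_def)
    with \<open>k1 < x\<close> \<open>x < k2\<close> show ?thesis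
      by blast
  qed
  then show ?thesis
    using that[of "{Inf K, Sup K}"] by blast
qed

lemma tail_integral_has_real_derivative:
  fixes f :: "real \<Rightarrow> real"
  assumes cont: "continuous_on {a..} f" and integrable: "\<And>t. a \<le> t \<Longrightarrow> f integrable_on {t..}"
    and "t \<in> {a..b}"
  shows "((\<lambda>t. integral {t..} f) has_real_derivative - f t) (at t within {a..b})"
proof -
  have split: "integral {t..} f = integral {a..} f - integral {a..t} f" if "a \<le> t" for t
  proof -
    have "(f has_integral integral {a..t} f) {a..t}"
      by (intro integrable_integral integrable_continuous_interval continuous_on_subset[OF cont]) auto
    moreover have "(f has_integral integral {t..} f) {t..}"
      using integrable[OF that] by (rule integrable_integral)
    ultimately have "(f has_integral (integral {a..t} f + integral {t..} f)) ({a..t} \<union> {t..})"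
      by (rule has_integral_Un) (rule negligible_subset[OF negligible_sing[of t]], auto)
    moreover have "{a..t} \<union> {t..} = {a..}"
      using that by auto
    ultimately show ?thesis
      by (simp add: integral_unique)
  qed
  have "((\<lambda>t. integral {a..} f - integral {a..t} f) has_real_derivative 0 - f t) (at t within {a..b})"
    using assms(3) by (intro DERIV_diff DERIV_const integral_has_real_derivative continuous_on_subset[OF cont]) auto
  then have "((\<lambda>t. integral {a..} f - integral {a..t} f) has_real_derivative - f t) (at t within {a..b})"
    by simp
  then show ?thesis
    by (rule has_field_derivative_transform_within[where d = 1]) (use assms(3) in \<open>auto simp: split[symmetric]\<close>)
qed

lemma integrable_on_norm_square_of_exp_bound:
  fixes E :: "real \<Rightarrow> 'a::real_normed_vector"
  assumes "continuous_on {0..} E" "c1 > 0" "\<And>t. t \<ge> 0 \<Longrightarrow> norm (E t) \<le> C1 * exp (- c1 * t)"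
    and "t \<ge> 0"
  shows "(\<lambda>s. (norm (E s))\<^sup>2) integrable_on {t..}"
proof (rule measurable_bounded_by_integrable_imp_integrable_real)
  show "(\<lambda>s. (norm (E s))\<^sup>2) \<in> borel_measurable (lebesgue_on {t..})"
    using assms(1,4) by (intro continuous_imp_measurable_on_sets_lebesgue continuous_intros)
      (auto intro: continuous_on_subset)
  have "(\<lambda>s. exp (- (2 * c1) * s)) integrable_on {t..}"
    using has_integral_exp_minus_to_infinity[of "2 * c1" t] assms(2) by (auto simp: integrable_on_def)
  from integrable_on_cmult_left[OF this, of "C1\<^sup>2"]
  show "(\<lambda>s. C1\<^sup>2 * exp (- (2 * c1) * s)) integrable_on {t..}"
    by simp
  fix s assume "s \<in> {t..}"
  then have "(norm (E s))\<^sup>2 \<le> (C1 * exp (- c1 * s))\<^sup>2"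
    using assms(3,4) by (intro power_mono) auto
  also have "\<dots> = C1\<^sup>2 * exp (- (2 * c1) * s)"
    by (simp add: power_mult_distrib power2_eq_square flip: exp_add)
  finally show "\<bar>(norm (E s))\<^sup>2\<bar> \<le> C1\<^sup>2 * exp (- (2 * c1) * s)"
    by simp
qed simp

lemma tail_integral_has_real_derivative_of_exp_bound:
  fixes E :: "real \<Rightarrow> 'a::real_normed_vector"
  assumes "continuous_on {0..} E" "c1 > 0" "\<And>t. t \<ge> 0 \<Longrightarrow> norm (E t) \<le> C1 * exp (- c1 * t)"
    and "t \<in> {0..b}"
  shows "((\<lambda>t. integral {t..} (\<lambda>s. (norm (E s))\<^sup>2)) has_real_derivative - (norm (E t))\<^sup>2)
    (at t within {0..b})"
  using assms by (intro tail_integral_has_real_derivative integrable_on_norm_square_of_exp_bound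
      continuous_intros) auto

lemma tail_integral_nonneg_of_exp_bound:
  fixes E :: "real \<Rightarrow> 'a::real_normed_vector"
  assumes "continuous_on {0..} E" "c1 > 0" "\<And>t. t \<ge> 0 \<Longrightarrow> norm (E t) \<le> C1 * exp (- c1 * t)"
    and "t \<ge> 0"
  shows "integral {t..} (\<lambda>s. (norm (E s))\<^sup>2) \<ge> 0"
  using integrable_on_norm_square_of_exp_bound[OF assms] by (simp add: integral_nonneg)

lemma integrable_on_effective_perturbation:
  fixes E :: "real \<Rightarrow> 'a::real_normed_vector"
  assumes "continuous_on {0..} E" "c1 > 0" "\<And>t. t \<ge> 0 \<Longrightarrow> norm (E t) \<le> C1 * exp (- c1 * t)"
    and "0 \<le> a" "\<mu> > 0"
  shows "(\<lambda>t. c * (3/4 * integral {t..} (\<lambda>s. (norm (E s))\<^sup>2)) powr \<mu> + norm (E t)) integrable_on {a..b}"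
proof -
  define T where "T t = 3/4 * integral {t..} (\<lambda>s. (norm (E s))\<^sup>2)" for t
  have "(T has_real_derivative 3/4 * - (norm (E t))\<^sup>2) (at t within {0..b})" if "t \<in> {0..b}" for t
    unfolding T_def using that by (intro DERIV_cmult tail_integral_has_real_derivative_of_exp_bound[OF assms(1-3)])
  then have "continuous_on {0..b} T"
    unfolding continuous_on_eq_continuous_within using DERIV_continuous by blast
  then have "continuous_on {a..b} T"
    by (rule continuous_on_subset) (use \<open>0 \<le> a\<close> in auto)
  moreover have "\<forall>t\<in>{a..b}. 0 \<le> T t \<and> (T t = 0 \<longrightarrow> 0 < \<mu>)"
    using tail_integral_nonneg_of_exp_bound[OF assms(1-3)] assms(4,5) by (simp add: T_def)
  ultimately have "continuous_on {a..b} (\<lambda>t. T t powr \<mu>)"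
    by (rule continuous_on_powr'[OF _ continuous_on_const])
  moreover have "continuous_on {a..b} E"
    using \<open>0 \<le> a\<close> by (intro continuous_on_subset[OF assms(1)]) auto
  ultimately show ?thesis
    unfolding T_def[symmetric]
    by (intro integrable_continuous_interval continuous_on_add continuous_on_mult[OF continuous_on_const]
        continuous_on_norm)
qed

lemma perturbed_gradient_flow_energy_has_real_derivative:
  fixes \<Phi> :: "real^'n \<Rightarrow> real" and E z :: "real \<Rightarrow> real^'n"
  assumes "\<Phi> differentiable (at (z t))" "(z has_vector_derivative z') (at t within {0..b})"
    and "continuous_on {0..} E" "c1 > 0" "\<And>t. t \<ge> 0 \<Longrightarrow> norm (E t) \<le> C1 * exp (- c1 * t)"
    and "t \<in> {0..b}"
  shows "((\<lambda>t. \<Phi> (z t) + 3/4 * integral {t..} (\<lambda>s. (norm (E s))\<^sup>2)) has_real_derivative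
      gradient \<Phi> (z t) \<bullet> z' + 3/4 * - (norm (E t))\<^sup>2) (at t within {0..b})"
  using assms by (intro DERIV_add DERIV_cmult has_real_derivative_comp_gradient
      tail_integral_has_real_derivative_of_exp_bound)

lemma inner_dissipation_le:
  fixes g e :: "'a::real_inner"
  shows "g \<bullet> (e - g) - 3/4 * (norm e)\<^sup>2 \<le> - 2/3 * (norm g)\<^sup>2"
proof -
  have "g \<bullet> e \<le> norm g * norm e"
    by (rule norm_cauchy_schwarz)
  moreover have "0 \<le> (2 * norm g - 3 * norm e)\<^sup>2"
    by simp
  ultimately show ?thesis
    by (simp add: inner_diff_right power2_norm_eq_inner[symmetric] power2_eq_square algebra_simps)
qed

text \<open>This is where the factor 4 comes from: either the speed \<open>a\<close> is dominated by \<open>R\<close>, or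
  \<open>D < 2 a\<close> and then \<open>4 (- Hd) / D \<ge> (8/3) a\<^sup>2 / (2 a) \<ge> a\<close>.\<close>
lemma speed_le_dissipation_rate:
  fixes a R D Hd :: real
  assumes "D > 0" "R \<ge> 0" "D \<le> a + R" "Hd \<le> - 2/3 * a\<^sup>2"
  shows "a + 4 * (1 / D) * Hd \<le> R"
proof -
  have "a * D + 4 * Hd \<le> R * D"
  proof (cases "a \<le> R")
    case True
    then have "a * D \<le> R * D"
      using assms by (intro mult_right_mono) auto
    then show ?thesis
      using assms zero_le_power2[of a] by linarith
  next
    case False
    then have "a * D \<le> a * (2 * a)"
      using assms by (intro mult_left_mono) auto
    moreover have "a * (2 * a) = 2 * a\<^sup>2" "0 \<le> R * D"
      using assms by (simp_all add: power2_eq_square)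
    ultimately show ?thesis
      using assms zero_le_power2[of a] by linarith
  qed
  then show ?thesis
    using assms by (simp add: field_simps)
qed

lemma lojasiewicz_ineq_shift:
  fixes \<phi> p T a :: real
  assumes "c > 0" "0 < \<mu>" "\<mu> \<le> 1" "T \<ge> 0" "c * \<bar>\<phi> - p\<bar> powr \<mu> \<le> a"
  shows "c * \<bar>\<phi> + T - p\<bar> powr \<mu> \<le> a + c * T powr \<mu>"
proof -
  have "\<bar>\<phi> + T - p\<bar> powr \<mu> \<le> (\<bar>\<phi> - p\<bar> + T) powr \<mu>"
    using assms by (intro powr_mono2) auto
  also have "\<dots> \<le> \<bar>\<phi> - p\<bar> powr \<mu> + T powr \<mu>"
    using assms by (intro powr_add_le_add_powr) auto
  finally show ?thesis
    using assms by (smt (verit) mult_left_mono distrib_left)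
qed

lemma length_le_lojasiewicz_integral:
  fixes H Hd v g e R :: "real \<Rightarrow> real"
  assumes "c > 0" "0 < \<mu>" "\<mu> < 1" "a \<le> b"
    and H_cont: "continuous_on {a..b} H"
    and H_deriv: "\<And>t. t \<in> {a<..<b} \<Longrightarrow> (H has_real_derivative Hd t) (at t)"
    and dissipation: "\<And>t. t \<in> {a<..<b} \<Longrightarrow> Hd t \<le> - 2/3 * (g t)\<^sup>2"
    and speed: "\<And>t. t \<in> {a<..<b} \<Longrightarrow> v t \<le> g t + e t"
    and lojasiewicz: "\<And>t. t \<in> {a<..<b} \<Longrightarrow> c * \<bar>H t - p\<bar> powr \<mu> \<le> g t + R t"
    and R_nonneg: "\<And>t. t \<in> {a<..<b} \<Longrightarrow> 0 \<le> R t"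
    and "v integrable_on {a..b}" "(\<lambda>t. R t + e t) integrable_on {a..b}"
  shows "integral {a..b} v
    \<le> 4 * (LBINT \<xi>=H b..H a. 1 / (c * \<bar>\<xi> - p\<bar> powr \<mu>)) + integral {a..b} (\<lambda>t. R t + e t)"
proof -
  have Hd_nonpos: "Hd t \<le> 0" if "t \<in> {a<..<b}" for t
    using order_trans[OF dissipation[OF that]] by simp
  have antimono: "H t \<le> H s" if "a \<le> s" "s \<le> t" "t \<le> b" for s t
  proof -
    have "\<exists>D. (H has_real_derivative D) (at x) \<and> D \<le> 0" if "x \<in> {s<..<t} - {}" for x
      using that \<open>a \<le> s\<close> \<open>t \<le> b\<close> H_deriv[of x] Hd_nonpos[of x]
      by (intro exI[of _ "Hd x"]) auto
    then have "H t - H s \<le> integral {s..t} (\<lambda>_. 0)"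
      using that by (intro DERIV_le_imp_diff_le_integral continuous_on_subset[OF H_cont]) auto
    then show ?thesis
      by simp
  qed
  then obtain S where "finite S" and level_set: "\<And>x. x \<in> {a<..<b} - S \<Longrightarrow> H x = p \<Longrightarrow>
      \<exists>k1 k2. k1 < x \<and> x < k2 \<and> (\<forall>s\<in>{k1<..<k2}. H s = p)"
    using antimono_level_set_locally_constant[of a b H p] antimono by blast
  define P where "P t = 4 * lojasiewicz_primitive c \<mu> (H t - p)" for t
  have "P b - P a \<le> integral {a..b} (\<lambda>t. R t + e t - v t)"
  proof (rule DERIV_le_imp_diff_le_integral[OF \<open>finite S\<close> \<open>a \<le> b\<close>])
    show "continuous_on {a..b} P"
      unfolding P_def using assms by (intro continuous_intros H_cont) auto
    show "(\<lambda>t. R t + e t - v t) integrable_on {a..b}"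
      using assms by (intro integrable_diff)
  next
    fix x assume x: "x \<in> {a<..<b} - S"
    show "\<exists>D. (P has_real_derivative D) (at x) \<and> D \<le> R x + e x - v x"
    proof (cases "H x = p")
      \<comment> \<open>Inside the level set \<open>{H = p}\<close>, \<open>H\<close> is locally constant, which forces \<open>g x = 0\<close>.\<close>
      case True
      obtain k1 k2 where "x \<in> {k1<..<k2}" and const: "\<forall>s\<in>{k1<..<k2}. H s = p"
        using level_set[OF x True] by auto
      have "(H has_real_derivative 0) (at x)"
        using DERIV_const[of p] open_greaterThanLessThan \<open>x \<in> {k1<..<k2}\<close>
        by (rule has_field_derivative_transform_within_open) (use const in simp)
      then have "Hd x = 0"
        using H_deriv x DERIV_unique by blast
      then have "g x = 0"
        using dissipation[of x] x by simp
      moreover have "(P has_real_derivative 0) (at x)"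
        using DERIV_const[of "P x"] open_greaterThanLessThan \<open>x \<in> {k1<..<k2}\<close>
        by (rule has_field_derivative_transform_within_open) (use const True in \<open>simp add: P_def\<close>)
      ultimately show ?thesis
        using speed[of x] R_nonneg[of x] x by auto
    next
      case False
      have "(P has_real_derivative 4 * (1 / (c * \<bar>H x - p\<bar> powr \<mu>) * (Hd x - 0))) (at x)"
        unfolding P_def using x False assms
        by (intro DERIV_cmult DERIV_chain2[OF has_real_derivative_lojasiewicz_primitive]
            DERIV_diff H_deriv DERIV_const) auto
      moreover have "g x + 4 * (1 / (c * \<bar>H x - p\<bar> powr \<mu>)) * Hd x \<le> R x"
        using x False assms by (intro speed_le_dissipation_rate lojasiewicz dissipation R_nonneg) auto
      ultimately show ?thesis
        using speed[of x] x by (intro exI[of _ "4 * (1 / (c * \<bar>H x - p\<bar> powr \<mu>) * (Hd x - 0))"]) auto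
    qed
  qed
  moreover have "P a - P b = 4 * (LBINT \<xi>=H b..H a. 1 / (c * \<bar>\<xi> - p\<bar> powr \<mu>))"
    using antimono[of a b] assms by (simp add: P_def LBINT_lojasiewicz_primitive)
  moreover have "integral {a..b} (\<lambda>t. R t + e t - v t) = integral {a..b} (\<lambda>t. R t + e t) - integral {a..b} v"
    using assms by (intro integral_diff)
  ultimately show ?thesis
    by linarith
qed

theorem lemma5p4:
  fixes \<Phi> :: "real^'n \<Rightarrow> real"
    and U :: "(real^'n) set"
    and z0 :: "real^'n"
    and c \<delta> \<mu> C1 c1 t' t'' :: real
    and E z z' :: "real \<Rightarrow> real^'n"
  assumes U_open: "open U"
    and analytic: "real_analytic_on \<Phi> U"
    and z0U: "z0 \<in> U"
    and c_pos: "c > 0"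
    and delta: "0 < \<delta>" "\<delta> \<le> 1"
    and mu: "1/2 \<le> \<mu>" "\<mu> < 1"
    and cball_sub: "cball z0 \<delta> \<subseteq> U"
    and loj: "\<And>w. norm (w - z0) \<le> \<delta> \<Longrightarrow>
                 norm (gradient \<Phi> w) \<ge> c * \<bar>\<Phi> w - \<Phi> z0\<bar> powr \<mu>"
    and E_cont: "continuous_on {0..} E"
    and E_bound: "C1 > 0" "c1 > 0" "\<And>t. t \<ge> 0 \<Longrightarrow> norm (E t) \<le> C1 * exp (- c1 * t)"
    and z_in_U: "\<And>t. t \<ge> 0 \<Longrightarrow> z t \<in> U"
    and z_deriv: "\<And>t. t \<ge> 0 \<Longrightarrow> (z has_vector_derivative z' t) (at t within {0..})"
    and z'_cont: "continuous_on {0..} z'"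
    and ode: "\<And>t. t \<ge> 0 \<Longrightarrow> z' t = - gradient \<Phi> (z t) + E t"
    and times: "0 \<le> t'" "t' \<le> t''"
    and in_ball: "\<And>t. t \<in> {t'..t''} \<Longrightarrow> z t \<in> ball z0 \<delta>"
  shows "let H = (\<lambda>t. \<Phi> (z t) + 3/4 * integral {t..} (\<lambda>s. (norm (E s))\<^sup>2));
             Et = (\<lambda>t. c * (3/4 * integral {t..} (\<lambda>s. (norm (E s))\<^sup>2)) powr \<mu> + norm (E t))
         in integral {t'..t''} (\<lambda>s. norm (z' s))
              \<le> 4 * (LBINT \<xi>=H t''..H t'. 1 / (c * \<bar>\<xi> - \<Phi> z0\<bar> powr \<mu>))
                + integral {t'..t''} Et"
proof -
  define T where "T t = 3/4 * integral {t..} (\<lambda>s. (norm (E s))\<^sup>2)" for t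
  define H where "H t = \<Phi> (z t) + T t" for t
  define g where "g t = gradient \<Phi> (z t)" for t
  have H_deriv: "(H has_real_derivative g t \<bullet> z' t + 3/4 * - (norm (E t))\<^sup>2) (at t within {0..t''})"
    if "t \<in> {0..t''}" for t
    unfolding H_def T_def g_def using that E_cont E_bound(2,3)
    by (intro perturbed_gradient_flow_energy_has_real_derivative real_analytic_on_imp_differentiable[OF analytic z_in_U]
        has_vector_derivative_within_subset[OF z_deriv]) auto
  then have "continuous_on {0..t''} H"
    unfolding continuous_on_eq_continuous_within using DERIV_continuous by blast
  then have H_cont: "continuous_on {t'..t''} H"
    by (rule continuous_on_subset) (use times in auto)
  have "integral {t'..t''} (\<lambda>s. norm (z' s))
      \<le> 4 * (LBINT \<xi>=H t''..H t'. 1 / (c * \<bar>\<xi> - \<Phi> z0\<bar> powr \<mu>))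
        + integral {t'..t''} (\<lambda>t. c * T t powr \<mu> + norm (E t))"
  proof (rule length_le_lojasiewicz_integral[where g = "\<lambda>t. norm (g t)", OF c_pos _ mu(2) times(2) H_cont])
    fix t assume t: "t \<in> {t'<..<t''}"
    then have "at t within {0..t''} = at t" and "t \<ge> 0"
      using times by (auto intro!: at_within_interior)
    then show "(H has_real_derivative g t \<bullet> z' t + 3/4 * - (norm (E t))\<^sup>2) (at t)"
      using H_deriv[of t] t by simp
    show "g t \<bullet> z' t + 3/4 * - (norm (E t))\<^sup>2 \<le> - 2/3 * (norm (g t))\<^sup>2"
      using inner_dissipation_le[of "g t" "E t"] ode[OF \<open>t \<ge> 0\<close>] by (simp add: g_def)
    show "norm (z' t) \<le> norm (g t) + norm (E t)"
      using ode[OF \<open>t \<ge> 0\<close>] norm_triangle_ineq[of "- g t" "E t"] by (simp add: g_def)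
    show "c * \<bar>H t - \<Phi> z0\<bar> powr \<mu> \<le> norm (g t) + c * T t powr \<mu>"
      unfolding H_def g_def T_def using c_pos mu in_ball[of t] t
        tail_integral_nonneg_of_exp_bound[OF E_cont E_bound(2,3) \<open>t \<ge> 0\<close>]
      by (intro lojasiewicz_ineq_shift loj) (auto simp: dist_norm norm_minus_commute)
  next
    show "(\<lambda>s. norm (z' s)) integrable_on {t'..t''}"
      using z'_cont times by (intro integrable_continuous_interval continuous_intros) (auto elim: continuous_on_subset)
    show "(\<lambda>t. c * T t powr \<mu> + norm (E t)) integrable_on {t'..t''}"
      unfolding T_def using E_cont E_bound(2,3) times mu by (intro integrable_on_effective_perturbation) auto
  qed (use mu c_pos in auto)
  then show ?thesis
    unfolding Let_def H_def T_def .
qed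

end
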